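(* Let $|\psi\rangle$ be a state on $\mathbb{C}^R\otimes(\mathbb{C}^\kappa\otimes\mathbb{C}^R)\otimes\mathbb{C}^\kappa$ (registers 1,2,3,4; $A$ = register 1, $B$ = registers 2,3, $C$ = register 4) such that $\mathrm{Tr}_A(|\psi\rangle\langle\psi|)$ is separable across $B|C$. Suppose $\mathsf{Density}$ and $\mathsf{MatchCheck}$ succeed on $|\psi\rangle$ with probability $\frac1\kappa-d_{\mathsf D}$ and $1-d_{\mathsf M}$ respectively. Then there exists a state $|\chi\rangle$ that is rigid after applying $\mathrm{CNOT}_{1,3}\mathrm{CNOT}_{2,4}$ such that $$|\langle\chi|\psi\rangle|^2\ge 1-\kappa d_{\mathsf D}-(\kappa+1)\sqrt{(\kappa+1)d_{\mathsf M}}.$$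
   Context: $\mathrm{CNOT}_{i,j}$ maps $|x\rangle_i|y\rangle_j\mapsto|x\rangle_i|y\oplus x\rangle_j$ with addition modulo the register dimension. $\mathsf{MatchCheck}$ measures all registers in the computational basis, obtaining $(v,c,w,d)$, and accepts iff $(v,c)=(w,d)$. $\mathsf{Density}$ applies $\mathrm{CNOT}_{1,3}\mathrm{CNOT}_{2,4}$ and then measures the first two registers in the Hadamard basis, accepting iff they are in the uniform superposition state; equivalently it accepts with probability $|\langle +'|\psi\rangle|^2$ where $|+'\rangle=\mathrm{CNOT}_{1,3}\mathrm{CNOT}_{2,4}\big(\tfrac{1}{\sqrt{R\kappa}}\sum_{v\in[R],c\in[\kappa]}|v\rangle|c\rangle\big)|0\rangle|0\rangle$. A state is "rigid after applying $\mathrm{CNOT}_{1,3}\mathrm{CNOT}_{2,4}$" if it has the form $\frac1{\sqrt R}\sum_{v\in[R]}|v\rangle|c_v\rangle|v\rangle|c_v\rangle$ for some indices $c_v\in[\kappa]$. *)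

theory Defs
  imports "HOL-Analysis.Analysis"
begin

text \<open>A vector in C^R (x) C^kappa (x) C^R (x) C^kappa is represented by its amplitude
  function psi v c w d, where only indices v < R, c < kappa, w < R, d < kappa matter.\<close>

type_synonym state4 = "nat \<Rightarrow> nat \<Rightarrow> nat \<Rightarrow> nat \<Rightarrow> complex"

definition inner4 :: "nat \<Rightarrow> nat \<Rightarrow> state4 \<Rightarrow> state4 \<Rightarrow> complex" where
  "inner4 R \<kappa> \<phi> \<psi> =
     (\<Sum>v<R. \<Sum>c<\<kappa>. \<Sum>w<R. \<Sum>d<\<kappa>. cnj (\<phi> v c w d) * \<psi> v c w d)"

definition is_state4 :: "nat \<Rightarrow> nat \<Rightarrow> state4 \<Rightarrow> bool" where
  "is_state4 R \<kappa> \<psi> \<longleftrightarrow> inner4 R \<kappa> \<psi> \<psi> = 1"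

text \<open>CNOT_{1,3}: |x>_1|y>_3 -> |x>_1|y+x mod R>_3;
  CNOT_{2,4}: |x>_2|y>_4 -> |x>_2|y+x mod kappa>_4 (as action on amplitudes).\<close>

definition CNOT13 :: "nat \<Rightarrow> state4 \<Rightarrow> state4" where
  "CNOT13 R \<psi> = (\<lambda>v c w d. \<psi> v c ((w + R - v mod R) mod R) d)"

definition CNOT24 :: "nat \<Rightarrow> state4 \<Rightarrow> state4" where
  "CNOT24 \<kappa> \<psi> = (\<lambda>v c w d. \<psi> v c w ((d + \<kappa> - c mod \<kappa>) mod \<kappa>))"

definition unif00 :: "nat \<Rightarrow> nat \<Rightarrow> state4" where
  "unif00 R \<kappa> = (\<lambda>v c w d. if w = 0 \<and> d = 0 then complex_of_real (1 / sqrt (real (R * \<kappa>))) else 0)"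

definition plus' :: "nat \<Rightarrow> nat \<Rightarrow> state4" where
  "plus' R \<kappa> = CNOT13 R (CNOT24 \<kappa> (unif00 R \<kappa>))"

definition density_accept :: "nat \<Rightarrow> nat \<Rightarrow> state4 \<Rightarrow> real" where
  "density_accept R \<kappa> \<psi> = (cmod (inner4 R \<kappa> (plus' R \<kappa>) \<psi>))\<^sup>2"

text \<open>MatchCheck: measure all registers obtaining (v,c,w,d), accept iff (v,c) = (w,d).\<close>
definition matchcheck_accept :: "nat \<Rightarrow> nat \<Rightarrow> state4 \<Rightarrow> real" where
  "matchcheck_accept R \<kappa> \<psi> =
     (\<Sum>v<R. \<Sum>c<\<kappa>. \<Sum>w<R. \<Sum>d<\<kappa>. if (v, c) = (w, d) then (cmod (\<psi> v c w d))\<^sup>2 else 0)"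

definition rigid_after_CNOT :: "nat \<Rightarrow> nat \<Rightarrow> state4 \<Rightarrow> bool" where
  "rigid_after_CNOT R \<kappa> chi \<longleftrightarrow>
     (\<exists>cv :: nat \<Rightarrow> nat. (\<forall>v<R. cv v < \<kappa>) \<and>
        (\<forall>v<R. \<forall>c<\<kappa>. \<forall>w<R. \<forall>d<\<kappa>.
           chi v c w d = (if w = v \<and> c = cv v \<and> d = cv v
                         then complex_of_real (1 / sqrt (real R)) else 0)))"

definition density_matrix :: "'i set \<Rightarrow> ('i \<Rightarrow> 'i \<Rightarrow> complex) \<Rightarrow> bool" where
  "density_matrix S \<rho> \<longleftrightarrow>
     (\<forall>i\<in>S. \<forall>j\<in>S. \<rho> j i = cnj (\<rho> i j)) \<and>
     (\<forall>x :: 'i \<Rightarrow> complex. 0 \<le> Re (\<Sum>i\<in>S. \<Sum>j\<in>S. cnj (x i) * \<rho> i j * x j)) \<and>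
     (\<Sum>i\<in>S. \<rho> i i) = 1"

text \<open>Tr_A(|psi><psi|) on B (x) C, B = registers 2,3 (index (c,w)), C = register 4 (index d).\<close>
definition reduced_BC :: "nat \<Rightarrow> state4 \<Rightarrow> (nat \<times> nat) \<times> nat \<Rightarrow> (nat \<times> nat) \<times> nat \<Rightarrow> complex" where
  "reduced_BC R \<psi> = (\<lambda>((c, w), d) ((c', w'), d'). \<Sum>v<R. \<psi> v c w d * cnj (\<psi> v c' w' d'))"

definition separable_BC :: "'a set \<Rightarrow> 'b set \<Rightarrow> ('a \<times> 'b \<Rightarrow> 'a \<times> 'b \<Rightarrow> complex) \<Rightarrow> bool" where
  "separable_BC SB SC \<rho> \<longleftrightarrow>
     (\<exists>(n :: nat) (p :: nat \<Rightarrow> real) \<beta> \<gamma>.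
        (\<forall>i<n. 0 \<le> p i) \<and> (\<Sum>i<n. p i) = 1 \<and>
        (\<forall>i<n. density_matrix SB (\<beta> i) \<and> density_matrix SC (\<gamma> i)) \<and>
        (\<forall>b\<in>SB. \<forall>c\<in>SC. \<forall>b'\<in>SB. \<forall>c'\<in>SC.
           \<rho> (b, c) (b', c') = (\<Sum>i<n. complex_of_real (p i) * \<beta> i b b' * \<gamma> i c c')))"

end

theory Submission
  imports Defs
begin

(* Write a v c = psi v c v c. Density accepts with probability |sum_{v,c} a v c|^2 / (R kappa)
   and MatchCheck with probability sum_{v,c} |a v c|^2.

   Separability of Tr_A |psi><psi| forces sum_v (sum_c |a v c|)^2 <= 1. Pairing the block of
   Tr_A with fixed register-3 value w against the phases of the a w c gives a Gram quadratic form
   dominating (sum_c |a w c|)^2; for a product beta (x) gamma of density matrices the entries of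
   these blocks are bounded, through the 2x2 minors and AM-GM, by terms summing to
   tr beta * tr gamma = 1.

   Now keep for each v only an index c_v maximising |a v c|. The discarded mass
   r_v = sum_c |a v c| - |a v c_v| satisfies r_v^2 <= (sum_c |a v c|)^2 - sum_c |a v c|^2, so by
   Cauchy-Schwarz |sum a|^2 - |sum_v a v c_v|^2 <= 2 R sqrt (1 - sum |a|^2) = 2 R sqrt dM.
   After dividing by R, the two squares are 1 - kappa dD and the overlap of psi with the rigid
   state determined by the c_v. *)

lemma norm_power2_diff_le:
  fixes x y :: "'a::real_normed_vector"
  shows "(norm x)\<^sup>2 - (norm y)\<^sup>2 \<le> norm (x - y) * (norm x + norm y)"
proof -
  have "(norm x)\<^sup>2 - (norm y)\<^sup>2 = (norm x - norm y) * (norm x + norm y)"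
    by (simp add: power2_eq_square algebra_simps)
  also have "\<dots> \<le> norm (x - y) * (norm x + norm y)"
    by (intro mult_right_mono norm_triangle_ineq2) simp
  finally show ?thesis .
qed

lemma sum_le_sqrt_card_mult_sum_power2:
  fixes f :: "'a \<Rightarrow> real"
  shows "sum f A \<le> sqrt (card A * (\<Sum>i\<in>A. (f i)\<^sup>2))"
  using Cauchy_Schwarz_ineq_sum[of "\<lambda>_. 1" f A] by (intro real_le_rsqrt) simp

lemma sum_power2_le_power2_sum:
  fixes f :: "'a \<Rightarrow> real"
  assumes "\<And>i. i \<in> A \<Longrightarrow> 0 \<le> f i"
  shows "(\<Sum>i\<in>A. (f i)\<^sup>2) \<le> (sum f A)\<^sup>2"
  using assms
proof (induction A rule: infinite_finite_induct)
  case (insert i A)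
  then have "0 \<le> f i * sum f A" by (simp add: sum_nonneg)
  with insert show ?case by (simp add: power2_eq_square algebra_simps)
qed simp_all

lemma norm_sum_minus_le:
  fixes f :: "'a \<Rightarrow> 'b::real_normed_vector"
  assumes "finite C" "c0 \<in> C"
  shows "norm (sum f C - f c0) \<le> (\<Sum>c\<in>C. norm (f c)) - norm (f c0)"
  using assms norm_sum[of f "C - {c0}"] by (simp add: sum.remove)

lemma power2_sum_minus_max_le:
  fixes f :: "'a \<Rightarrow> real"
  assumes "finite C" "c0 \<in> C" and max: "\<And>c. c \<in> C \<Longrightarrow> 0 \<le> f c \<and> f c \<le> f c0"
  shows "(sum f C - f c0)\<^sup>2 \<le> (sum f C)\<^sup>2 - (\<Sum>c\<in>C. (f c)\<^sup>2)"
proof -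
  have "(\<Sum>c\<in>C. (f c)\<^sup>2) \<le> (\<Sum>c\<in>C. f c0 * f c)"
    using max by (intro sum_mono) (simp add: power2_eq_square mult_right_mono)
  also have "\<dots> = f c0 * sum f C" by (simp add: sum_distrib_left)
  finally have "(\<Sum>c\<in>C. (f c)\<^sup>2) \<le> f c0 * sum f C" .
  moreover have "0 \<le> f c0 * (sum f C - f c0)"
    using assms by (intro mult_nonneg_nonneg) (auto intro: member_le_sum)
  ultimately show ?thesis by (simp add: power2_eq_square algebra_simps)
qed

lemma obtain_pointwise_argmax:
  fixes f :: "'v \<Rightarrow> 'c \<Rightarrow> 'b::linorder"
  assumes "finite C" "C \<noteq> {}"
  obtains g where "\<And>v. g v \<in> C" "\<And>v c. c \<in> C \<Longrightarrow> f v c \<le> f v (g v)"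
proof -
  have "\<exists>c0\<in>C. \<forall>c\<in>C. f v c \<le> f v c0" for v
  proof -
    obtain c0 where "c0 \<in> C" "Max (f v ` C) = f v c0"
      using obtains_MAX[OF assms, of "f v"] .
    then show ?thesis
      using assms(1) by (metis Max_ge finite_imageI image_eqI)
  qed
  then show ?thesis
    using that by metis
qed

lemma sum_norm_minus_argmax_le:
  fixes a :: "'v \<Rightarrow> 'c \<Rightarrow> 'a::real_normed_vector"
  assumes "finite C" and cv: "\<And>v. cv v \<in> C" "\<And>v c. c \<in> C \<Longrightarrow> norm (a v c) \<le> norm (a v (cv v))"
    and bound: "(\<Sum>v\<in>V. (\<Sum>c\<in>C. norm (a v c))\<^sup>2) \<le> 1"
  shows "(\<Sum>v\<in>V. (\<Sum>c\<in>C. norm (a v c)) - norm (a v (cv v)))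
    \<le> sqrt (card V * (1 - (\<Sum>v\<in>V. \<Sum>c\<in>C. (norm (a v c))\<^sup>2)))"
proof -
  have "(\<Sum>v\<in>V. ((\<Sum>c\<in>C. norm (a v c)) - norm (a v (cv v)))\<^sup>2)
      \<le> (\<Sum>v\<in>V. (\<Sum>c\<in>C. norm (a v c))\<^sup>2 - (\<Sum>c\<in>C. (norm (a v c))\<^sup>2))"
    using assms(1) cv by (intro sum_mono power2_sum_minus_max_le) auto
  also have "\<dots> \<le> 1 - (\<Sum>v\<in>V. \<Sum>c\<in>C. (norm (a v c))\<^sup>2)"
    using bound by (simp add: sum_subtractf)
  finally show ?thesis
    using sum_le_sqrt_card_mult_sum_power2[of "\<lambda>v. (\<Sum>c\<in>C. norm (a v c)) - norm (a v (cv v))" V]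
    by (meson mult_left_mono of_nat_0_le_iff order_trans real_sqrt_le_mono)
qed

lemma power2_norm_sum_diff_le_argmax:
  fixes a :: "'v \<Rightarrow> 'c \<Rightarrow> 'a::real_normed_vector"
  assumes "finite C" and cv: "\<And>v. cv v \<in> C" "\<And>v c. c \<in> C \<Longrightarrow> norm (a v c) \<le> norm (a v (cv v))"
    and bound: "(\<Sum>v\<in>V. (\<Sum>c\<in>C. norm (a v c))\<^sup>2) \<le> 1"
  shows "(norm (\<Sum>v\<in>V. \<Sum>c\<in>C. a v c))\<^sup>2 - (norm (\<Sum>v\<in>V. a v (cv v)))\<^sup>2
    \<le> 2 * real (card V) * sqrt (1 - (\<Sum>v\<in>V. \<Sum>c\<in>C. (norm (a v c))\<^sup>2))"
proof -
  define A where "A v = (\<Sum>c\<in>C. norm (a v c))" for v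
  define r where "r v = A v - norm (a v (cv v))" for v
  define M where "M = (\<Sum>v\<in>V. \<Sum>c\<in>C. (norm (a v c))\<^sup>2)"
  define S where "S = (\<Sum>v\<in>V. \<Sum>c\<in>C. a v c)"
  define T where "T = (\<Sum>v\<in>V. a v (cv v))"
  have r_nonneg: "0 \<le> sum r V"
    unfolding r_def A_def using assms(1) cv(1) by (intro sum_nonneg) (auto intro: member_le_sum)
  have r_le: "sum r V \<le> sqrt (card V * (1 - M))"
    unfolding r_def A_def M_def by (rule sum_norm_minus_argmax_le[OF assms])
  have "norm (S - T) \<le> (\<Sum>v\<in>V. norm ((\<Sum>c\<in>C. a v c) - a v (cv v)))"
    unfolding S_def T_def sum_subtractf[symmetric] by (rule norm_sum)
  also have "\<dots> \<le> sum r V"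
    unfolding r_def A_def using assms(1) cv(1) by (intro sum_mono norm_sum_minus_le)
  finally have S_minus_T: "norm (S - T) \<le> sum r V" .
  have "norm S \<le> sum A V"
    unfolding S_def A_def by (intro order.trans[OF norm_sum] sum_mono norm_sum)
  moreover have "norm T \<le> sum A V"
    unfolding T_def A_def using assms(1) cv(1)
    by (intro order.trans[OF norm_sum] sum_mono member_le_sum) auto
  ultimately have "(norm S)\<^sup>2 - (norm T)\<^sup>2 \<le> sum r V * (2 * sum A V)"
    using norm_power2_diff_le[of S T] mult_mono[OF S_minus_T, of "norm S + norm T"] r_nonneg
    by (simp add: order_trans)
  also have "\<dots> \<le> sqrt (card V * (1 - M)) * (2 * sqrt (card V))"
  proof (intro mult_mono mult_left_mono r_le)
    have "sqrt (card V * (\<Sum>v\<in>V. (A v)\<^sup>2)) \<le> sqrt (card V)"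
      using bound unfolding A_def by (intro real_sqrt_le_mono mult_left_le) auto
    then show "sum A V \<le> sqrt (card V)"
      using sum_le_sqrt_card_mult_sum_power2[of A V] by linarith
  qed (use order_trans[OF r_nonneg r_le] in \<open>simp_all add: sum_nonneg A_def\<close>)
  also have "\<dots> = 2 * real (card V) * sqrt (1 - M)"
    by (simp add: real_sqrt_mult)
  finally show ?thesis
    unfolding S_def T_def M_def .
qed

lemma sum_mult_two_point_indicator:
  fixes f :: "'a \<Rightarrow> 'b::comm_ring"
  assumes "finite S" "i \<in> S" "j \<in> S"
  shows "(\<Sum>l\<in>S. f l * ((if l = i then s else 0) + (if l = j then t else 0))) = f i * s + f j * t"
proof -
  have "(\<Sum>l\<in>S. f l * ((if l = i then s else 0) + (if l = j then t else 0)))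
      = (\<Sum>l\<in>S. if l = i then f l * s else 0) + (\<Sum>l\<in>S. if l = j then f l * t else 0)"
    by (simp add: distrib_left sum.distrib if_distrib[of "\<lambda>x. _ * x"] cong: if_cong)
  then show ?thesis using assms by simp
qed

lemma density_matrix_two_point_form_nonneg:
  assumes "density_matrix S M" "finite S" "i \<in> S" "j \<in> S"
  shows "0 \<le> Re (cnj s * M i i * s + cnj s * M i j * t + cnj t * M j i * s + cnj t * M j j * t)"
proof -
  define x where "x l = (if l = i then s else 0) + (if l = j then t else 0)" for l
  have cnj_x: "cnj (x l) = (if l = i then cnj s else 0) + (if l = j then cnj t else 0)" for l
    by (simp add: x_def)
  have "0 \<le> Re (\<Sum>l\<in>S. \<Sum>l'\<in>S. cnj (x l) * M l l' * x l')"
    using assms(1) unfolding density_matrix_def by blast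
  also have "(\<Sum>l\<in>S. \<Sum>l'\<in>S. cnj (x l) * M l l' * x l')
      = (\<Sum>l\<in>S. (M l i * s + M l j * t) * cnj (x l))"
    using sum_mult_two_point_indicator[OF assms(2-4), of "\<lambda>l'. cnj (x _) * M _ l'"]
    by (simp add: x_def algebra_simps)
  also have "\<dots> = cnj s * M i i * s + cnj s * M i j * t + cnj t * M j i * s + cnj t * M j j * t"
    unfolding cnj_x sum_mult_two_point_indicator[OF assms(2-4)] by (simp add: algebra_simps)
  finally show ?thesis .
qed

lemma density_matrix_diag:
  assumes "density_matrix S M" "finite S" "i \<in> S"
  shows density_matrix_diag_real: "M i i = of_real (Re (M i i))"
    and density_matrix_diag_nonneg: "0 \<le> Re (M i i)"
proof -
  have "M i i = cnj (M i i)"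
    using assms(1,3) unfolding density_matrix_def by blast
  then show "M i i = of_real (Re (M i i))"
    by (metis Reals_cnj_iff of_real_Re)
  show "0 \<le> Re (M i i)"
    using density_matrix_two_point_form_nonneg[OF assms(1,2,3,3), of 1 0] by simp
qed

lemma density_matrix_trace_Re:
  assumes "density_matrix S M"
  shows "(\<Sum>i\<in>S. Re (M i i)) = 1"
  using assms unfolding density_matrix_def by (metis Re_sum one_complex.sel(1))

lemma quadratic_nonneg_imp_le_mult:
  fixes p q n :: real
  assumes "0 \<le> p" "0 \<le> q" and nonneg: "\<And>r. 0 \<le> r\<^sup>2 * p - 2 * r * n + q * n"
  shows "n \<le> p * q"
proof (cases "q = 0")
  case True
  show ?thesis
  proof (rule ccontr)
    assume "\<not> n \<le> p * q"
    with True have "0 < n" by simp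
    define r where "r = n / (p + 1)"
    have "0 < r" using \<open>0 < n\<close> assms(1) by (simp add: r_def)
    have "r * p \<le> n"
      using \<open>0 < n\<close> assms(1) by (simp add: r_def field_simps)
    then have "r * (r * p - 2 * n) < 0"
      using \<open>0 < r\<close> \<open>0 < n\<close> by (simp add: mult_pos_neg)
    with nonneg[of r] True show False by (simp add: power2_eq_square algebra_simps)
  qed
next
  case False
  then have "0 < q" using assms(2) by simp
  moreover have "0 \<le> q * (p * q - n)"
    using nonneg[of q] by (simp add: power2_eq_square algebra_simps)
  ultimately show ?thesis by (simp add: zero_le_mult_iff)
qed

lemma density_matrix_norm_le:
  assumes "density_matrix S M" "finite S" "i \<in> S" "j \<in> S"
  shows "(cmod (M i j))\<^sup>2 \<le> Re (M i i) * Re (M j j)"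
proof (rule quadratic_nonneg_imp_le_mult)
  show "0 \<le> Re (M i i)" "0 \<le> Re (M j j)"
    using density_matrix_diag_nonneg[OF assms(1,2)] assms(3,4) by auto
  have herm: "M j i = cnj (M i j)"
    using assms(1,3,4) unfolding density_matrix_def by blast
  fix r :: real
  have "0 \<le> Re (cnj (of_real r) * M i i * of_real r + cnj (of_real r) * M i j * - cnj (M i j)
      + cnj (- cnj (M i j)) * M j i * of_real r + cnj (- cnj (M i j)) * M j j * - cnj (M i j))"
    by (rule density_matrix_two_point_form_nonneg[OF assms, of "of_real r" "- cnj (M i j)"])
  also have "\<dots> = r\<^sup>2 * Re (M i i) - 2 * r * (cmod (M i j))\<^sup>2 + Re (M j j) * (cmod (M i j))\<^sup>2"
    using density_matrix_diag_real[OF assms(1,2)] assms(3,4) unfolding herm cmod_power2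
    by (simp add: power2_eq_square algebra_simps)
  finally show "0 \<le> r\<^sup>2 * Re (M i i) - 2 * r * (cmod (M i j))\<^sup>2 + Re (M j j) * (cmod (M i j))\<^sup>2" .
qed

lemma mult_le_mean_cross_products:
  fixes x y b b' g g' :: real
  assumes "0 \<le> x" "0 \<le> y" "0 \<le> b" "0 \<le> b'" "0 \<le> g" "0 \<le> g'"
    and "x\<^sup>2 \<le> b * b'" "y\<^sup>2 \<le> g * g'"
  shows "x * y \<le> (b * g' + b' * g) / 2"
proof (rule power2_le_imp_le)
  have "(x * y)\<^sup>2 \<le> (b * b') * (g * g')"
    unfolding power_mult_distrib using assms by (intro mult_mono) auto
  also have "\<dots> \<le> ((b * g' + b' * g) / 2)\<^sup>2"
    using zero_le_power2[of "b * g' - b' * g"] by (simp add: power2_eq_square algebra_simps)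
  finally show "(x * y)\<^sup>2 \<le> ((b * g' + b' * g) / 2)\<^sup>2" .
qed (use assms in simp)

lemma density_matrix_product_block_sum_le:
  assumes "density_matrix (C \<times> W) \<beta>" "density_matrix C \<gamma>" "finite C" "finite W"
  shows "(\<Sum>w\<in>W. \<Sum>c\<in>C. \<Sum>c'\<in>C. cmod (\<beta> (c, w) (c', w)) * cmod (\<gamma> c c')) \<le> 1"
proof -
  define b where "b c w = Re (\<beta> (c, w) (c, w))" for c w
  define g where "g c = Re (\<gamma> c c)" for c
  have fin: "finite (C \<times> W)" using assms(3,4) by simp
  have "cmod (\<beta> (c, w) (c', w)) * cmod (\<gamma> c c') \<le> (b c w * g c' + b c' w * g c) / 2"
    if "c \<in> C" "c' \<in> C" "w \<in> W" for c c' w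
    unfolding b_def g_def using that
    by (intro mult_le_mean_cross_products norm_ge_zero
        density_matrix_diag_nonneg[OF assms(1) fin] density_matrix_diag_nonneg[OF assms(2,3)]
        density_matrix_norm_le[OF assms(1) fin] density_matrix_norm_le[OF assms(2,3)]) auto
  then have "(\<Sum>w\<in>W. \<Sum>c\<in>C. \<Sum>c'\<in>C. cmod (\<beta> (c, w) (c', w)) * cmod (\<gamma> c c'))
      \<le> (\<Sum>w\<in>W. \<Sum>c\<in>C. \<Sum>c'\<in>C. (b c w * g c' + b c' w * g c) / 2)"
    by (intro sum_mono) auto
  also have "\<dots> = (\<Sum>w\<in>W. \<Sum>c\<in>C. \<Sum>c'\<in>C. b c w * g c')"
    using sum.swap[of "\<lambda>c c'. b c' _ * g c" C C]
    by (simp add: sum.distrib add_divide_distrib flip: sum_divide_distrib)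
  also have "\<dots> = (\<Sum>w\<in>W. \<Sum>c\<in>C. b c w) * sum g C"
    by (simp add: sum_distrib_right flip: sum_distrib_left)
  also have "(\<Sum>w\<in>W. \<Sum>c\<in>C. b c w) = (\<Sum>i\<in>C \<times> W. Re (\<beta> i i))"
    unfolding b_def by (subst sum.swap) (simp add: sum.cartesian_product case_prod_unfold)
  finally show ?thesis
    using density_matrix_trace_Re[OF assms(1)] density_matrix_trace_Re[OF assms(2)]
    by (simp add: g_def)
qed

lemma separable_BC_block_sum_le:
  assumes "finite C" "finite W" "separable_BC (C \<times> W) C \<rho>"
  shows "(\<Sum>w\<in>W. \<Sum>c\<in>C. \<Sum>c'\<in>C. cmod (\<rho> ((c, w), c) ((c', w), c'))) \<le> 1"
proof -
  obtain n :: nat and p \<beta> \<gamma> where p_nonneg: "\<forall>k<n. 0 \<le> p k" and p_sum: "(\<Sum>k<n. p k) = 1"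
    and dm: "\<forall>k<n. density_matrix (C \<times> W) (\<beta> k) \<and> density_matrix C (\<gamma> k)"
    and decomp: "\<forall>b\<in>C \<times> W. \<forall>c\<in>C. \<forall>b'\<in>C \<times> W. \<forall>c'\<in>C.
       \<rho> (b, c) (b', c') = (\<Sum>k<n. of_real (p k) * \<beta> k b b' * \<gamma> k c c')"
    using assms(3) unfolding separable_BC_def by blast
  define B where "B k w c c' = cmod (\<beta> k (c, w) (c', w)) * cmod (\<gamma> k c c')" for k w c c'
  have "cmod (\<rho> ((c, w), c) ((c', w), c')) \<le> (\<Sum>k<n. p k * B k w c c')"
    if "c \<in> C" "c' \<in> C" "w \<in> W" for c c' w
  proof -
    have "cmod (\<rho> ((c, w), c) ((c', w), c'))
        \<le> (\<Sum>k<n. cmod (of_real (p k) * \<beta> k (c, w) (c', w) * \<gamma> k c c'))"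
      using decomp that by (simp add: norm_sum)
    also have "\<dots> = (\<Sum>k<n. p k * B k w c c')"
      using p_nonneg by (simp add: B_def norm_mult mult.assoc)
    finally show ?thesis .
  qed
  then have "(\<Sum>w\<in>W. \<Sum>c\<in>C. \<Sum>c'\<in>C. cmod (\<rho> ((c, w), c) ((c', w), c')))
      \<le> (\<Sum>w\<in>W. \<Sum>c\<in>C. \<Sum>c'\<in>C. \<Sum>k<n. p k * B k w c c')"
    by (intro sum_mono) auto
  also have "\<dots> = (\<Sum>k<n. p k * (\<Sum>w\<in>W. \<Sum>c\<in>C. \<Sum>c'\<in>C. B k w c c'))"
    by (simp add: sum_distrib_left sum.swap[of _ "{..<n}"])
  also have "\<dots> \<le> (\<Sum>k<n. p k)"
    using p_nonneg dm assms(1,2) unfolding B_def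
    by (intro sum_mono mult_left_le density_matrix_product_block_sum_le) auto
  finally show ?thesis
    using p_sum by simp
qed

lemma of_real_cmod_power2: "(of_real (cmod z))\<^sup>2 = z * cnj z"
  using complex_norm_square[of z] by simp

lemma cnj_sgn_mult_self: "cnj (sgn z) * z = of_real (cmod z)"
proof (cases "z = 0")
  case False
  have "cnj (sgn z) * z = (z * cnj z) / of_real (cmod z)"
    by (simp add: sgn_div_norm scaleR_conv_of_real field_simps)
  also have "z * cnj z = (of_real (cmod z))\<^sup>2"
    by (rule of_real_cmod_power2[symmetric])
  finally show ?thesis
    using False by (simp add: power2_eq_square)
qed simp

lemma reduced_BC_gram:
  fixes \<psi> :: state4 and x :: "nat \<Rightarrow> complex"
  shows "(\<Sum>c\<in>C. \<Sum>c'\<in>C. cnj (x c) * x c' * reduced_BC R \<psi> ((c, w), c) ((c', w), c'))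
    = of_real (\<Sum>v<R. (cmod (\<Sum>c\<in>C. cnj (x c) * \<psi> v c w c))\<^sup>2)"
proof -
  have "of_real (\<Sum>v<R. (cmod (\<Sum>c\<in>C. cnj (x c) * \<psi> v c w c))\<^sup>2)
      = (\<Sum>v<R. (\<Sum>c\<in>C. cnj (x c) * \<psi> v c w c) * cnj (\<Sum>c'\<in>C. cnj (x c') * \<psi> v c' w c'))"
    by (simp add: of_real_cmod_power2)
  also have "\<dots> = (\<Sum>v<R. \<Sum>c\<in>C. \<Sum>c'\<in>C. cnj (x c) * x c' * (\<psi> v c w c * cnj (\<psi> v c' w c')))"
    by (simp only: cnj_sum sum_product) (simp add: algebra_simps)
  also have "\<dots> = (\<Sum>c\<in>C. \<Sum>c'\<in>C. cnj (x c) * x c' * reduced_BC R \<psi> ((c, w), c) ((c', w), c'))"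
    by (simp add: reduced_BC_def sum_distrib_left sum.swap[of _ "{..<R}"])
  finally show ?thesis ..
qed

lemma power2_sum_norm_diagonal_le_reduced_BC:
  fixes \<psi> :: state4
  assumes "w < R"
  shows "(\<Sum>c\<in>C. cmod (\<psi> w c w c))\<^sup>2
    \<le> (\<Sum>c\<in>C. \<Sum>c'\<in>C. cmod (reduced_BC R \<psi> ((c, w), c) ((c', w), c')))"
proof -
  define x where "x c = sgn (\<psi> w c w c)" for c
  define z where "z v = (\<Sum>c\<in>C. cnj (x c) * \<psi> v c w c)" for v
  have z_w: "z w = of_real (\<Sum>c\<in>C. cmod (\<psi> w c w c))"
    by (simp add: z_def x_def cnj_sgn_mult_self)
  have "(\<Sum>c\<in>C. cmod (\<psi> w c w c))\<^sup>2 = (cmod (z w))\<^sup>2"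
    unfolding z_w norm_of_real by (simp add: sum_nonneg)
  also have "\<dots> \<le> (\<Sum>v<R. (cmod (z v))\<^sup>2)"
    using assms by (intro member_le_sum) auto
  also have "\<dots> = cmod (\<Sum>c\<in>C. \<Sum>c'\<in>C. cnj (x c) * x c' * reduced_BC R \<psi> ((c, w), c) ((c', w), c'))"
    unfolding reduced_BC_gram z_def norm_of_real by (simp add: sum_nonneg)
  also have "\<dots> \<le> (\<Sum>c\<in>C. \<Sum>c'\<in>C. cmod (cnj (x c) * x c' * reduced_BC R \<psi> ((c, w), c) ((c', w), c')))"
    by (intro order.trans[OF norm_sum] sum_mono norm_sum)
  also have "\<dots> \<le> (\<Sum>c\<in>C. \<Sum>c'\<in>C. cmod (reduced_BC R \<psi> ((c, w), c) ((c', w), c')))"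
    unfolding x_def norm_mult by (intro sum_mono mult_left_le) (auto simp: norm_sgn mult_le_one)
  finally show ?thesis .
qed

lemma separable_reduced_BC_diagonal_bound:
  fixes \<psi> :: state4
  assumes "separable_BC ({..<\<kappa>} \<times> {..<R}) {..<\<kappa>} (reduced_BC R \<psi>)"
  shows "(\<Sum>v<R. (\<Sum>c<\<kappa>. cmod (\<psi> v c v c))\<^sup>2) \<le> 1"
proof -
  have "(\<Sum>v<R. (\<Sum>c<\<kappa>. cmod (\<psi> v c v c))\<^sup>2)
      \<le> (\<Sum>v<R. \<Sum>c<\<kappa>. \<Sum>c'<\<kappa>. cmod (reduced_BC R \<psi> ((c, v), c) ((c', v), c')))"
    by (intro sum_mono power2_sum_norm_diagonal_le_reduced_BC) simp
  also have "\<dots> \<le> 1"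
    by (rule separable_BC_block_sum_le[OF _ _ assms]) simp_all
  finally show ?thesis .
qed

lemma sum_sum_delta:
  assumes "finite A" "finite B"
  shows "(\<Sum>a\<in>A. \<Sum>b\<in>B. if x = a \<and> y = b then f a b else 0) = (if x \<in> A \<and> y \<in> B then f x y else 0)"
proof -
  have "(\<Sum>a\<in>A. \<Sum>b\<in>B. if x = a \<and> y = b then f a b else 0)
      = (\<Sum>a\<in>A. if x = a then (\<Sum>b\<in>B. if y = b then f a b else 0) else 0)"
    by (intro sum.cong) auto
  then show ?thesis
    using assms by simp
qed

lemma cyclic_shift_mod_eq_0_iff:
  fixes v w n :: nat
  assumes "v < n" "w < n"
  shows "(w + n - v) mod n = 0 \<longleftrightarrow> v = w"
  using assms by (cases "w < v") (auto simp: mod_if)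

lemma plus'_apply:
  assumes "v < R" "w < R" "c < \<kappa>" "d < \<kappa>"
  shows "plus' R \<kappa> v c w d = (if v = w \<and> c = d then of_real (1 / sqrt (R * \<kappa>)) else 0)"
  using assms by (simp add: plus'_def CNOT13_def CNOT24_def unif00_def cyclic_shift_mod_eq_0_iff)

lemma density_accept_eq:
  "density_accept R \<kappa> \<psi> = (cmod (\<Sum>v<R. \<Sum>c<\<kappa>. \<psi> v c v c))\<^sup>2 / (R * \<kappa>)"
proof -
  have "inner4 R \<kappa> (plus' R \<kappa>) \<psi> = (\<Sum>v<R. \<Sum>c<\<kappa>. of_real (1 / sqrt (R * \<kappa>)) * \<psi> v c v c)"
    unfolding inner4_def
  proof (intro sum.cong refl)
    fix v c
    assume "v \<in> {..<R}" "c \<in> {..<\<kappa>}"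
    then have "(\<Sum>w<R. \<Sum>d<\<kappa>. cnj (plus' R \<kappa> v c w d) * \<psi> v c w d)
        = (\<Sum>w<R. \<Sum>d<\<kappa>. if v = w \<and> c = d then of_real (1 / sqrt (R * \<kappa>)) * \<psi> v c w d else 0)"
      by (intro sum.cong refl) (simp add: plus'_apply)
    also have "\<dots> = of_real (1 / sqrt (R * \<kappa>)) * \<psi> v c v c"
      using \<open>v \<in> {..<R}\<close> \<open>c \<in> {..<\<kappa>}\<close> by (simp add: sum_sum_delta)
    finally show "(\<Sum>w<R. \<Sum>d<\<kappa>. cnj (plus' R \<kappa> v c w d) * \<psi> v c w d)
        = of_real (1 / sqrt (R * \<kappa>)) * \<psi> v c v c" .
  qed
  then show ?thesis
    by (simp add: density_accept_def norm_divide power_divide flip: sum_divide_distrib)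
qed

lemma matchcheck_accept_eq:
  "matchcheck_accept R \<kappa> \<psi> = (\<Sum>v<R. \<Sum>c<\<kappa>. (cmod (\<psi> v c v c))\<^sup>2)"
  unfolding matchcheck_accept_def by (intro sum.cong refl) (simp add: sum_sum_delta)

definition rigid_state :: "nat \<Rightarrow> (nat \<Rightarrow> nat) \<Rightarrow> state4" where
  "rigid_state R cv = (\<lambda>v c w d. if c = cv v \<and> w = v \<and> d = cv v then of_real (1 / sqrt R) else 0)"

lemma rigid_after_CNOT_rigid_state:
  assumes "\<forall>v<R. cv v < \<kappa>"
  shows "rigid_after_CNOT R \<kappa> (rigid_state R cv)"
  using assms unfolding rigid_after_CNOT_def rigid_state_def by auto

lemma inner4_rigid_state:
  assumes "\<forall>v<R. cv v < \<kappa>"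
  shows "inner4 R \<kappa> (rigid_state R cv) \<psi> = of_real (1 / sqrt R) * (\<Sum>v<R. \<psi> v (cv v) v (cv v))"
proof -
  have "(\<Sum>w<R. \<Sum>d<\<kappa>. cnj (rigid_state R cv v c w d) * \<psi> v c w d)
      = (if c = cv v then of_real (1 / sqrt R) * \<psi> v c v c else 0)" if "v < R" "c < \<kappa>" for v c
  proof -
    have "(\<Sum>w<R. \<Sum>d<\<kappa>. cnj (rigid_state R cv v c w d) * \<psi> v c w d)
        = (\<Sum>w<R. \<Sum>d<\<kappa>. if v = w \<and> c = d
             then (if c = cv v then of_real (1 / sqrt R) * \<psi> v c w d else 0) else 0)"
      by (intro sum.cong refl) (auto simp: rigid_state_def)
    then show ?thesis
      using that by (simp add: sum_sum_delta)
  qed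
  then have "inner4 R \<kappa> (rigid_state R cv) \<psi>
      = (\<Sum>v<R. \<Sum>c<\<kappa>. if c = cv v then of_real (1 / sqrt R) * \<psi> v c v c else 0)"
    unfolding inner4_def by (intro sum.cong refl) simp
  also have "\<dots> = (\<Sum>v<R. of_real (1 / sqrt R) * \<psi> v (cv v) v (cv v))"
    using assms by (intro sum.cong refl) simp
  finally show ?thesis
    by (simp add: sum_distrib_left)
qed

lemma matchcheck_accept_le_1:
  assumes "separable_BC ({..<\<kappa>} \<times> {..<R}) {..<\<kappa>} (reduced_BC R \<psi>)"
  shows "matchcheck_accept R \<kappa> \<psi> \<le> 1"
proof -
  have "matchcheck_accept R \<kappa> \<psi> \<le> (\<Sum>v<R. (\<Sum>c<\<kappa>. cmod (\<psi> v c v c))\<^sup>2)"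
    unfolding matchcheck_accept_eq by (intro sum_mono sum_power2_le_power2_sum) simp
  also have "\<dots> \<le> 1"
    by (rule separable_reduced_BC_diagonal_bound[OF assms])
  finally show ?thesis .
qed

lemma obtain_rigid_state_overlap_ge:
  fixes \<psi> :: state4
  assumes "R \<ge> 1" "\<kappa> \<ge> 1" "separable_BC ({..<\<kappa>} \<times> {..<R}) {..<\<kappa>} (reduced_BC R \<psi>)"
  obtains chi where "rigid_after_CNOT R \<kappa> chi"
    "\<kappa> * density_accept R \<kappa> \<psi> - 2 * sqrt (1 - matchcheck_accept R \<kappa> \<psi>)
       \<le> (cmod (inner4 R \<kappa> chi \<psi>))\<^sup>2"
proof -
  define a where "a v c = \<psi> v c v c" for v c
  have block_bound: "(\<Sum>v<R. (\<Sum>c<\<kappa>. cmod (a v c))\<^sup>2) \<le> 1"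
    unfolding a_def by (rule separable_reduced_BC_diagonal_bound[OF assms(3)])
  have "{..<\<kappa>} \<noteq> {}"
    using assms(2) by (simp add: lessThan_empty_iff)
  then obtain cv where cv: "\<And>v. cv v < \<kappa>"
    and cv_max: "\<And>v c. c < \<kappa> \<Longrightarrow> cmod (a v c) \<le> cmod (a v (cv v))"
    using obtain_pointwise_argmax[of "{..<\<kappa>}" "\<lambda>v c. cmod (a v c)"] by auto
  have "(cmod (\<Sum>v<R. \<Sum>c<\<kappa>. a v c))\<^sup>2 - (cmod (\<Sum>v<R. a v (cv v)))\<^sup>2
      \<le> 2 * R * sqrt (1 - matchcheck_accept R \<kappa> \<psi>)"
    using power2_norm_sum_diff_le_argmax[of "{..<\<kappa>}" cv a, OF _ _ _ block_bound] cv cv_max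
    by (simp add: a_def matchcheck_accept_eq)
  then have close: "(cmod (\<Sum>v<R. \<Sum>c<\<kappa>. a v c))\<^sup>2 / R - (cmod (\<Sum>v<R. a v (cv v)))\<^sup>2 / R
      \<le> 2 * sqrt (1 - matchcheck_accept R \<kappa> \<psi>)"
    using assms(1) by (simp add: field_simps)
  have "\<kappa> * density_accept R \<kappa> \<psi> = (cmod (\<Sum>v<R. \<Sum>c<\<kappa>. a v c))\<^sup>2 / R"
    using assms(2) by (simp add: a_def density_accept_eq)
  moreover have "(cmod (inner4 R \<kappa> (rigid_state R cv) \<psi>))\<^sup>2 = (cmod (\<Sum>v<R. a v (cv v)))\<^sup>2 / R"
    using cv by (simp add: inner4_rigid_state a_def norm_divide power_divide)
  moreover have "rigid_after_CNOT R \<kappa> (rigid_state R cv)"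
    using cv by (intro rigid_after_CNOT_rigid_state) simp
  ultimately show ?thesis
    using that close by simp
qed

lemma two_sqrt_le_mult_sqrt:
  fixes k x :: real
  assumes "1 \<le> k" "0 \<le> x"
  shows "2 * sqrt x \<le> (k + 1) * sqrt ((k + 1) * x)"
proof -
  have "2 * 1 \<le> (k + 1) * sqrt (k + 1)"
    using assms(1) by (intro mult_mono) auto
  then have "2 * sqrt x \<le> (k + 1) * sqrt (k + 1) * sqrt x"
    using assms(2) by (intro mult_right_mono) auto
  then show ?thesis
    by (simp add: real_sqrt_mult mult.assoc)
qed

theorem claim4p6:
  fixes R \<kappa> :: nat and \<psi> :: state4 and dD dM :: real
  assumes "R \<ge> 1" and "\<kappa> \<ge> 1"
    and "is_state4 R \<kappa> \<psi>"
    and "separable_BC ({..<\<kappa>} \<times> {..<R}) {..<\<kappa>} (reduced_BC R \<psi>)"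
    and "density_accept R \<kappa> \<psi> = 1 / real \<kappa> - dD"
    and "matchcheck_accept R \<kappa> \<psi> = 1 - dM"
  shows "\<exists>chi. rigid_after_CNOT R \<kappa> chi \<and>
           (cmod (inner4 R \<kappa> chi \<psi>))\<^sup>2
             \<ge> 1 - real \<kappa> * dD - (real \<kappa> + 1) * sqrt ((real \<kappa> + 1) * dM)"
proof -
  obtain chi where rigid: "rigid_after_CNOT R \<kappa> chi"
    and overlap: "\<kappa> * density_accept R \<kappa> \<psi> - 2 * sqrt (1 - matchcheck_accept R \<kappa> \<psi>)
      \<le> (cmod (inner4 R \<kappa> chi \<psi>))\<^sup>2"
    using obtain_rigid_state_overlap_ge[OF assms(1,2,4)] .
  have "0 \<le> dM"
    using matchcheck_accept_le_1[OF assms(4)] assms(6) by simp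
  have "\<kappa> * density_accept R \<kappa> \<psi> = 1 - \<kappa> * dD"
    using assms(2,5) by (simp add: field_simps)
  moreover have "2 * sqrt dM \<le> (real \<kappa> + 1) * sqrt ((real \<kappa> + 1) * dM)"
    using assms(2) \<open>0 \<le> dM\<close> by (intro two_sqrt_le_mult_sqrt) simp_all
  ultimately show ?thesis
    using rigid overlap assms(6) by (intro exI[of _ chi]) auto
qed

end
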